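(* Let $d\ge 1$ and let $\varphi(x)$ be an $\mathcal L_d$-formula in the single free variable $x$ which is a finite conjunction of literals, each of the form $[t(x):p]$ or $\neg[t(x):p]$ with $p\in\mathbb H_d$ and $t(x)$ a term obtained from $x$ by applying finitely many function symbols $u_U$, $\pi_q$. If $\mathcal H_d\models\exists x\,\varphi(x)$, then $\mathcal V_d\models\exists x\,\varphi(x)$.
   Context: Notation. For $d\ge 1$, $\mathbb H_d$ is the set of complex linear subspaces of $\mathbb C^d$, ordered by inclusion $\le$, with $\top=\mathbb C^d$, $\bot=\{0\}$, $p^\bot$ the orthogonal complement, $p\wedge q=p\cap q$ and $p\vee q=p+q$. $\mathbb V_d\subseteq\mathbb H_d$ is the set of one-dimensional subspaces (rays). $\mathbb U_d$ is the set of unitary operators on $\mathbb C^d$, and for $U\in\mathbb U_d$, $p\in\mathbb H_d$, $U(p)=\{Uv: v\in p\}$. The Sasaki projection is $p\,\&\,q := q\cap(q^\bot+p)$; equivalently $p\,\&\,q=\{\Pi_q v: v\in p\}$ where $\Pi_q$ is the orthogonal projector onto $q$. Language $\mathcal L_d$: a first-order language without equality and without constants, having a unary function symbol $u_U$ for each $U\in\mathbb U_d$, a unary function symbol $\pi_q$ for each $q\in\mathbb H_d$, and a unary relation symbol $[\,\cdot:p]$ for each $p\in\mathbb H_d$. Hilbert model $\mathcal H_d$: the $\mathcal L_d$-structure with domain $\mathbb H_d$, $u_U^{\mathcal H_d}(x)=U(x)$, $\pi_q^{\mathcal H_d}(x)=x\,\&\,q$, and $[x:p]^{\mathcal H_d}$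 holds iff $x\le p$. Vector model $\mathcal V_d$: the $\mathcal L_d$-structure with domain $\mathbb V_d\cup\{\bot\}$ and the same formulas: $u_U^{\mathcal V_d}(x)=U(x)$, $\pi_q^{\mathcal V_d}(x)=x\,\&\,q$, $[x:p]^{\mathcal V_d}$ iff $x\le p$. *)

theory Defs
  imports "HOL-Analysis.Analysis"
begin

text \<open>C^d is modelled as complex^'n for a finite index type 'n, d = CARD('n) \<ge> 1.\<close>

definition cinner :: "complex^'n::finite \<Rightarrow> complex^'n \<Rightarrow> complex" where
  "cinner x y = (\<Sum>i\<in>UNIV. cnj (x $ i) * y $ i)"

definition csubspace :: "(complex^'n::finite) set \<Rightarrow> bool" where
  "csubspace S \<longleftrightarrow> 0 \<in> S \<and> (\<forall>x\<in>S. \<forall>y\<in>S. x + y \<in> S) \<and> (\<forall>c. \<forall>x\<in>S. c *s x \<in> S)"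

definition ray :: "(complex^'n::finite) set \<Rightarrow> bool" where
  "ray S \<longleftrightarrow> (\<exists>v. v \<noteq> 0 \<and> S = {c *s v | c. True})"

definition bot_sp :: "(complex^'n::finite) set" where
  "bot_sp = {0}"

definition ortho :: "(complex^'n::finite) set \<Rightarrow> (complex^'n) set" where
  "ortho p = {v. \<forall>w\<in>p. cinner w v = 0}"

definition join :: "(complex^'n::finite) set \<Rightarrow> (complex^'n) set \<Rightarrow> (complex^'n) set" where
  "join p q = {a + b | a b. a \<in> p \<and> b \<in> q}"

definition sasaki :: "(complex^'n::finite) set \<Rightarrow> (complex^'n) set \<Rightarrow> (complex^'n) set" where
  "sasaki p q = q \<inter> join (ortho q) p"

definition cadj :: "complex^'n^'n \<Rightarrow> complex^'n^'n::finite" where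
  "cadj U = (\<chi> i j. cnj (U $ j $ i))"

definition unitary :: "complex^'n^'n::finite \<Rightarrow> bool" where
  "unitary U \<longleftrightarrow> U ** cadj U = mat 1 \<and> cadj U ** U = mat 1"

definition uapp :: "complex^'n^'n::finite \<Rightarrow> (complex^'n) set \<Rightarrow> (complex^'n) set" where
  "uapp U p = (\<lambda>v. U *v v) ` p"

datatype ('n::finite) qterm = TVar | TU "complex^'n^'n" "'n qterm" | TPi "(complex^'n) set" "'n qterm"

fun wf_term :: "('n::finite) qterm \<Rightarrow> bool" where
  "wf_term TVar = True"
| "wf_term (TU U t) = (unitary U \<and> wf_term t)"
| "wf_term (TPi q t) = (csubspace q \<and> wf_term t)"

text \<open>Interpretation of terms (identical in H_d and V_d).\<close>
fun teval :: "('n::finite) qterm \<Rightarrow> (complex^'n) set \<Rightarrow> (complex^'n) set" where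
  "teval TVar x = x"
| "teval (TU U t) x = uapp U (teval t x)"
| "teval (TPi q t) x = sasaki (teval t x) q"

text \<open>A literal (b, t, p): [t(x):p] if b, \<not>[t(x):p] otherwise. A formula is a
  finite conjunction of literals, given as a list.\<close>
type_synonym 'n literal = "bool \<times> 'n qterm \<times> (complex^'n) set"

definition wf_formula :: "('n::finite) literal list \<Rightarrow> bool" where
  "wf_formula phi \<longleftrightarrow> (\<forall>(b, t, p)\<in>set phi. wf_term t \<and> csubspace p)"

definition holds :: "('n::finite) literal list \<Rightarrow> (complex^'n) set \<Rightarrow> bool" where
  "holds phi x \<longleftrightarrow> (\<forall>(b, t, p)\<in>set phi. (teval t x \<subseteq> p) = b)"

definition H_sat_ex :: "('n::finite) literal list \<Rightarrow> bool" where
  "H_sat_ex phi \<longleftrightarrow> (\<exists>x. csubspace x \<and> holds phi x)"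

definition V_sat_ex :: "('n::finite) literal list \<Rightarrow> bool" where
  "V_sat_ex phi \<longleftrightarrow> (\<exists>x. (ray x \<or> x = bot_sp) \<and> holds phi x)"

end

theory Submission
  imports Defs
begin

text \<open>Every term t denotes the image map of a complex-linear map on vectors: unitaries act
  linearly, and the Sasaki projection x & q is the image of x under the orthogonal projection
  onto q. Hence t(x) \<le> p holds iff x lies in the subspace of vectors sent into p by the map of t.
  A satisfying subspace x therefore fails each negative literal because it is not contained in
  one of finitely many subspaces; over the infinite field of complex numbers x is not covered by
  their union, and the ray spanned by any uncovered v \<in> x (or \<bottom>, if v = 0) satisfies every
  literal.\<close>

lemma csubspace_eq_vec_subspace: "csubspace = vec.subspace"
  by (simp add: fun_eq_iff csubspace_def vec.subspace_def)

lemma scaleR_eq_scalar_mult_of_real: "(r::real) *\<^sub>R (x::complex^'n::finite) = complex_of_real r *s x"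
  unfolding vec_eq_iff vector_scaleR_component vector_smult_component
  by (simp add: scaleR_conv_of_real)

lemma csubspace_imp_subspace: "csubspace S \<Longrightarrow> subspace S"
  by (simp add: csubspace_def subspace_def scaleR_eq_scalar_mult_of_real)

lemma inner_eq_Re_cinner: "inner (w::complex^'n::finite) z = Re (cinner w z)"
  by (simp add: inner_vec_def cinner_def inner_complex_def Re_sum)

lemma cinner_scale_left: "cinner (c *s w) z = cnj c * cinner w z"
  by (simp add: cinner_def sum_distrib_left mult.assoc)

lemma cinner_scale_right: "cinner w (c *s z) = c * cinner w z"
  by (simp add: cinner_def sum_distrib_left algebra_simps)

lemma cinner_add_right: "cinner w (a + b) = cinner w a + cinner w b"
  by (simp add: cinner_def sum.distrib algebra_simps)

lemma cinner_self_eq_0: "cinner (w::complex^'n::finite) w = 0 \<longleftrightarrow> w = 0"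
proof
  assume "cinner w w = 0"
  then have "inner w w = 0"
    by (simp add: inner_eq_Re_cinner)
  then show "w = 0"
    by simp
qed (simp add: cinner_def)

lemma csubspace_ortho: "csubspace (ortho p)"
  by (simp add: csubspace_def ortho_def cinner_add_right cinner_scale_right) (simp add: cinner_def)

lemma ortho_Int_eq_0: "v \<in> p \<Longrightarrow> v \<in> ortho p \<Longrightarrow> v = 0"
  by (simp add: ortho_def flip: cinner_self_eq_0)

text \<open>The real orthogonal complement of a complex subspace is already closed under
  multiplication by \<i>, so it coincides with the complex one.\<close>

lemma orthogonal_decomposition_exists:
  assumes q: "csubspace q"
  shows "\<exists>y\<in>q. v - y \<in> ortho q"
proof -
  have span_q: "span q = q"
    using csubspace_imp_subspace[OF q] by (simp add: span_eq_iff)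
  obtain y z where y: "y \<in> q" and z: "\<And>w. w \<in> q \<Longrightarrow> orthogonal z w" and v: "v = y + z"
    using orthogonal_subspace_decomp_exists[of q v] unfolding span_q by blast
  have "cinner w z = 0" if w: "w \<in> q" for w
  proof -
    have "\<i> *s w \<in> q"
      using q w by (simp add: csubspace_eq_vec_subspace vec.subspace_scale)
    then have "inner w z = 0" "inner (\<i> *s w) z = 0"
      using z w by (metis orthogonal_def inner_commute)+
    then show ?thesis
      by (simp add: inner_eq_Re_cinner cinner_scale_left complex_eq_iff)
  qed
  then have "v - y \<in> ortho q"
    using v by (simp add: ortho_def)
  with y show ?thesis ..
qed

definition cproj :: "(complex^'n::finite) set \<Rightarrow> complex^'n \<Rightarrow> complex^'n" where
  "cproj q v = (SOME y. y \<in> q \<and> v - y \<in> ortho q)"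

lemma cproj_in: "csubspace q \<Longrightarrow> cproj q v \<in> q"
  and cproj_residual_in_ortho: "csubspace q \<Longrightarrow> v - cproj q v \<in> ortho q"
  unfolding cproj_def using someI_ex[OF orthogonal_decomposition_exists[unfolded Bex_def]] by blast+

lemma cproj_unique:
  assumes q: "csubspace q" and y: "y \<in> q" "v - y \<in> ortho q"
  shows "cproj q v = y"
proof -
  note q' = q[unfolded csubspace_eq_vec_subspace]
  note ortho' = csubspace_ortho[unfolded csubspace_eq_vec_subspace]
  have "cproj q v - y \<in> q"
    by (rule vec.subspace_diff[OF q' cproj_in[OF q] y(1)])
  moreover have "(v - y) - (v - cproj q v) \<in> ortho q"
    by (rule vec.subspace_diff[OF ortho' y(2) cproj_residual_in_ortho[OF q]])
  ultimately show ?thesis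
    using ortho_Int_eq_0 by fastforce
qed

lemma linear_cproj:
  assumes q: "csubspace q"
  shows "Vector_Spaces.linear (*s) (*s) (cproj q)"
proof -
  note q' = q[unfolded csubspace_eq_vec_subspace]
  note ortho' = csubspace_ortho[unfolded csubspace_eq_vec_subspace]
  have "cproj q (a + b) = cproj q a + cproj q b" for a b
  proof (rule cproj_unique[OF q])
    show "cproj q a + cproj q b \<in> q"
      by (rule vec.subspace_add[OF q' cproj_in[OF q] cproj_in[OF q]])
    have "(a - cproj q a) + (b - cproj q b) \<in> ortho q"
      by (rule vec.subspace_add[OF ortho' cproj_residual_in_ortho[OF q] cproj_residual_in_ortho[OF q]])
    then show "a + b - (cproj q a + cproj q b) \<in> ortho q"
      by (simp add: algebra_simps)
  qed
  moreover have "cproj q (c *s a) = c *s cproj q a" for c a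
  proof (rule cproj_unique[OF q])
    show "c *s cproj q a \<in> q"
      by (rule vec.subspace_scale[OF q' cproj_in[OF q]])
    have "c *s (a - cproj q a) \<in> ortho q"
      by (rule vec.subspace_scale[OF ortho' cproj_residual_in_ortho[OF q]])
    then show "c *s a - c *s cproj q a \<in> ortho q"
      by (simp add: vector_ssub_ldistrib)
  qed
  ultimately show ?thesis
    by (simp add: Vector_Spaces.linear_iff vec.vector_space_axioms)
qed

lemma sasaki_eq_image_cproj:
  assumes q: "csubspace q"
  shows "sasaki p q = cproj q ` p"
proof (intro equalityI subsetI)
  fix w assume "w \<in> sasaki p q"
  then obtain a b where "w \<in> q" "a \<in> ortho q" "b \<in> p" "w = a + b"
    by (auto simp: sasaki_def join_def)
  moreover have "b - w = - a"
    using \<open>w = a + b\<close> by simp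
  ultimately show "w \<in> cproj q ` p"
    using q csubspace_ortho cproj_unique
    by (metis csubspace_eq_vec_subspace image_eqI vec.subspace_neg)
next
  fix w assume "w \<in> cproj q ` p"
  then obtain b where b: "b \<in> p" "w = cproj q b"
    by blast
  have "w - b \<in> ortho q"
    using cproj_residual_in_ortho[OF q, of b] csubspace_ortho b(2)
    by (metis csubspace_eq_vec_subspace minus_diff_eq vec.subspace_neg)
  then show "w \<in> sasaki p q"
    unfolding sasaki_def join_def using cproj_in[OF q] b by force
qed

fun term_map :: "('n::finite) qterm \<Rightarrow> complex^'n \<Rightarrow> complex^'n" where
  "term_map TVar = id"
| "term_map (TU U t) = (*v) U \<circ> term_map t"
| "term_map (TPi q t) = cproj q \<circ> term_map t"

lemma linear_term_map: "wf_term t \<Longrightarrow> Vector_Spaces.linear (*s) (*s) (term_map t)"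
  by (induction t) (auto intro: Vector_Spaces.linear_compose linear_cproj vec.linear_id)

lemma teval_eq_image_term_map: "wf_term t \<Longrightarrow> teval t x = term_map t ` x"
  by (induction t) (auto simp: uapp_def sasaki_eq_image_cproj image_comp)

lemma wf_formulaD: "wf_formula phi \<Longrightarrow> (b, t, p) \<in> set phi \<Longrightarrow> wf_term t \<and> csubspace p"
  unfolding wf_formula_def by fastforce

lemma holds_iff_subset_vimage:
  assumes "wf_formula phi"
  shows "holds phi x \<longleftrightarrow> (\<forall>(b, t, p)\<in>set phi. (x \<subseteq> term_map t -` p) = b)"
  unfolding holds_def
proof (rule ball_cong[OF refl], clarify)
  fix b t p assume "(b, t, p) \<in> set phi"
  then have "wf_term t"
    using wf_formulaD[OF assms] by blast
  then show "(teval t x \<subseteq> p) = b \<longleftrightarrow> (x \<subseteq> term_map t -` p) = b"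
    by (simp add: teval_eq_image_term_map image_subset_iff_subset_vimage)
qed

lemma subspace_vimage_term_map:
  "wf_term t \<Longrightarrow> csubspace p \<Longrightarrow> vec.subspace (term_map t -` p)"
  using module_hom.subspace_vimage linear_term_map
  by (metis csubspace_eq_vec_subspace linear_iff_module_hom)

context vector_space
begin

lemma subspace_not_covered:
  assumes inf: "infinite (UNIV :: 'a set)" and X: "subspace X" and F: "finite F"
    and "\<And>S. S \<in> F \<Longrightarrow> subspace S \<and> \<not> X \<subseteq> S"
  shows "\<exists>v\<in>X. \<forall>S\<in>F. v \<notin> S"
  using F assms(4)
proof (induction F rule: finite_induct)
  case empty
  then show ?case
    using subspace_0[OF X] by blast
next
  case (insert S F)
  obtain v where v: "v \<in> X" "\<forall>T\<in>F. v \<notin> T"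
    using insert by blast
  have S: "subspace S" "\<not> X \<subseteq> S"
    using insert.prems by auto
  show ?case
  proof (cases "v \<in> S")
    case False
    with v show ?thesis
      by blast
  next
    case True
    obtain w where w: "w \<in> X" "w \<notin> S"
      using S(2) by blast
    text \<open>The line w + c v avoids S, and meets each T \<in> F at most once since v \<notin> T.\<close>
    have not_in_S: "w + scale c v \<notin> S" for c
    proof
      assume "w + scale c v \<in> S"
      then have "(w + scale c v) - scale c v \<in> S"
        using subspace_diff[OF S(1) _ subspace_scale[OF S(1) True]] by blast
      with w(2) show False
        by simp
    qed
    have "finite {c. w + scale c v \<in> T}" if T: "T \<in> F" for T
    proof -
      have "c = c'" if "w + scale c v \<in> T" "w + scale c' v \<in> T" for c c'
      proof (rule ccontr)
        assume "c \<noteq> c'"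
        have "scale (c - c') v \<in> T"
          using subspace_diff[OF _ that] insert.prems T by (simp add: scale_left_diff_distrib)
        then have "scale (inverse (c - c')) (scale (c - c') v) \<in> T"
          using subspace_scale insert.prems T by blast
        with \<open>c \<noteq> c'\<close> v(2) T show False
          by simp
      qed
      then have "{c. w + scale c v \<in> T} \<subseteq> {c0}" if "w + scale c0 v \<in> T" for c0
        using that by blast
      then show ?thesis
        by (cases "\<exists>c0. w + scale c0 v \<in> T") (auto intro: finite_subset)
    qed
    then have "finite (\<Union>T\<in>F. {c. w + scale c v \<in> T})"
      using insert.hyps(1) by blast
    then obtain c where "c \<notin> (\<Union>T\<in>F. {c. w + scale c v \<in> T})"
      using ex_new_if_finite[OF inf] by blast
    moreover have "w + scale c v \<in> X"
      using X v(1) w(1) by (simp add: subspace_add subspace_scale)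
    ultimately show ?thesis
      using not_in_S by blast
  qed
qed

end

lemma ray_or_bot_span_singleton: "ray (vec.span {v}) \<or> vec.span {v} = bot_sp"
  by (cases "v = 0") (auto simp: ray_def bot_sp_def vec.span_singleton full_SetCompr_eq)

lemma span_singleton_subset_iff: "vec.subspace S \<Longrightarrow> vec.span {v} \<subseteq> S \<longleftrightarrow> v \<in> S"
  by (meson insert_subset vec.span_minimal vec.span_superset empty_subsetI subset_trans)

lemma holds_span_singleton_iff:
  assumes "wf_formula phi"
  shows "holds phi (vec.span {v}) \<longleftrightarrow> (\<forall>(b, t, p)\<in>set phi. (term_map t v \<in> p) = b)"
  unfolding holds_iff_subset_vimage[OF assms]
proof (rule ball_cong[OF refl], clarify)
  fix b t p assume "(b, t, p) \<in> set phi"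
  then have "vec.subspace (term_map t -` p)"
    using wf_formulaD[OF assms] subspace_vimage_term_map by blast
  then show "(vec.span {v} \<subseteq> term_map t -` p) = b \<longleftrightarrow> (term_map t v \<in> p) = b"
    by (simp add: span_singleton_subset_iff)
qed

theorem mainTheorem5:
  fixes phi :: "('n::finite) literal list"
  assumes "wf_formula phi"
    and "H_sat_ex phi"
  shows "V_sat_ex phi"
proof -
  obtain x where x: "csubspace x" "holds phi x"
    using assms(2) unfolding H_sat_ex_def by blast
  then have holds_x: "(x \<subseteq> term_map t -` p) = b" if "(b, t, p) \<in> set phi" for b t p
    using that holds_iff_subset_vimage[OF assms(1)] by fastforce
  define F where "F = (\<lambda>(b, t, p). term_map t -` p) ` {l \<in> set phi. \<not> fst l}"
  have "finite F"
    unfolding F_def by simp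
  moreover have "vec.subspace S \<and> \<not> x \<subseteq> S" if "S \<in> F" for S
    using that holds_x wf_formulaD[OF assms(1)] subspace_vimage_term_map
    unfolding F_def by fastforce
  ultimately obtain v where v: "v \<in> x" "\<forall>S\<in>F. v \<notin> S"
    using vec.subspace_not_covered[OF infinite_UNIV_char_0] x(1)
    unfolding csubspace_eq_vec_subspace by blast
  have "holds phi (vec.span {v})"
    unfolding holds_span_singleton_iff[OF assms(1)]
    using v holds_x unfolding F_def by (fastforce split: bool.split)
  then show ?thesis
    unfolding V_sat_ex_def using ray_or_bot_span_singleton by blast
qed

end
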